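(* Assume the univalence axiom. Let $A\xrightarrow{i}E\xrightarrow{p}B$ be a short exact sequence of abelian groups, $G$ an abelian group, $G\to F\to E$ a short exact sequence, and suppose given path data $i^*(F)=\mathrm{pt}$, i.e. an isomorphism $\psi:G\oplus A\cong i^*(F)$ of middle groups respecting inclusions of $G$ and projections to $A$. Let $G\to F/A\to B$ be the short exact sequence whose middle group is the cokernel $F/A$ of $A\to G\oplus A\xrightarrow{\psi}i^*(F)\to F$, with maps $G\to F\to F/A$ and $F/A\to B$ induced by $F\to E\xrightarrow{p}B$. Then there is path data $p^*(F/A)=F$, i.e. an isomorphism between the middle group of $p^*(F/A)$ and $F$ respecting the inclusions of $G$ and the projections to $E$.
   Context: Short exact sequence $X\xrightarrow{j}M\xrightarrow{q}Y$: $j$ injective, $q$ surjective, $q\circ j=0$, and $X\to\ker q$ surjective. For $g:Y'\to Y$, the pullback $g^*(M)$ is the short exact sequence $X\to M\times_Y Y'\to Y'$ with middle group $\{(m,y')\mid q(m)=g(y')\}$, inclusion $x\mapsto (j(x),0)$ and projection $(m,y')\mapsto y'$. The trivial sequence $\mathrm{pt}$ from $G$ to $A$ is $G\to G\oplus A\to A$. *)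

theory Defs
  imports "HOL-Algebra.Algebra"
begin

text \<open>Abelian groups are HOL-Algebra commutative groups (written multiplicatively).
  A short exact sequence X --j--> M --q--> Y.\<close>

definition ses where
  "ses K M Y j q \<longleftrightarrow>
     j \<in> hom K M \<and> q \<in> hom M Y \<and> inj_on j (carrier K) \<and> q ` carrier M = carrier Y \<and>
     (\<forall>x\<in>carrier K. q (j x) = (one Y)) \<and> kernel M Y q \<subseteq> j ` carrier K"

definition pb_group where
  "pb_group M Y' q g = (M \<times>\<times> Y')\<lparr>carrier :=
      {(m, y'). m \<in> carrier M \<and> y' \<in> carrier Y' \<and> q m = g y'}\<rparr>"

definition pb_incl where
  "pb_incl Y' j = (\<lambda>x. (j x, (one Y')))"

definition pb_proj where
  "pb_proj = snd"

definition pt_group where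
  "pt_group G A = G \<times>\<times> A"

definition pt_incl where
  "pt_incl A = (\<lambda>x. (x, (one A)))"

definition pt_proj where
  "pt_proj = snd"

text \<open>Image of the composite A -> G (+) A --psi--> i^*(F) -> F.\<close>

definition A_image where
  "A_image G A \<psi> = (\<lambda>a. fst (\<psi> ((one G), a))) ` carrier A"

definition quot_group where
  "quot_group F G A \<psi> = F Mod (A_image G A \<psi>)"

definition quot_incl where
  "quot_incl F G A \<psi> k = (\<lambda>g. r_coset F (A_image G A \<psi>) (k g))"

definition quot_proj where
  "quot_proj p r = (\<lambda>C. p (r (SOME f. f \<in> C)))"

end

theory Submission
  imports Defs
begin

text \<open>Restricting \<psi> to the summand A gives a homomorphism s : A \<rightarrow> F with r \<circ> s = i, and F/A is
  F/s(A). The map f \<mapsto> (s(A) f, r f) from F into the pullback of F/s(A) \<rightarrow> B along p is a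
  homomorphism. It is injective: if s(a) g and g have the same image under r then i a = 1, so a = 1.
  It is surjective: a pair (s(A) f, e) with p e = p (r f) has e (r f)\<inverse> in ker p = i(A), say equal
  to i a, and then s(a) f is a preimage. Its inverse is the required isomorphism; it respects the
  inclusions of G because r \<circ> k = 1.\<close>

lemma carrier_pb_group:
  "carrier (pb_group M Y' q g) = {(m, y'). m \<in> carrier M \<and> y' \<in> carrier Y' \<and> q m = g y'}"
  by (simp add: pb_group_def)

lemma mult_pb_group:
  "x \<otimes>\<^bsub>pb_group M Y' q g\<^esub> y = (fst x \<otimes>\<^bsub>M\<^esub> fst y, snd x \<otimes>\<^bsub>Y'\<^esub> snd y)"
  by (simp add: pb_group_def DirProd_def case_prod_beta)

lemma carrier_pt_group: "carrier (pt_group G A) = carrier G \<times> carrier A"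
  by (simp add: pt_group_def DirProd_def)

lemma mult_pt_group:
  "x \<otimes>\<^bsub>pt_group G A\<^esub> y = (fst x \<otimes>\<^bsub>G\<^esub> fst y, snd x \<otimes>\<^bsub>A\<^esub> snd y)"
  by (simp add: pt_group_def DirProd_def case_prod_beta)

lemma group_homI: "\<lbrakk>group G; group H; h \<in> hom G H\<rbrakk> \<Longrightarrow> group_hom G H h"
  by (simp add: group_hom_def group_hom_axioms_def)

lemma pb_trivialisation_lift:
  assumes "monoid G"
    and \<psi>_hom: "\<psi> \<in> hom (pt_group G A) (pb_group F A r i)"
    and \<psi>_proj: "\<forall>x\<in>carrier (pt_group G A). pb_proj (\<psi> x) = pt_proj x"
  shows "(\<lambda>a. fst (\<psi> (\<one>\<^bsub>G\<^esub>, a))) \<in> hom A F"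
    and "a \<in> carrier A \<Longrightarrow> r (fst (\<psi> (\<one>\<^bsub>G\<^esub>, a))) = i a"
proof -
  have \<psi>_carrier: "\<psi> (\<one>\<^bsub>G\<^esub>, a) \<in> carrier (pb_group F A r i)"
    and \<psi>_snd: "snd (\<psi> (\<one>\<^bsub>G\<^esub>, a)) = a" if "a \<in> carrier A" for a
  proof -
    have "(\<one>\<^bsub>G\<^esub>, a) \<in> carrier (pt_group G A)"
      using that \<open>monoid G\<close> by (simp add: carrier_pt_group monoid.one_closed)
    then show "\<psi> (\<one>\<^bsub>G\<^esub>, a) \<in> carrier (pb_group F A r i)" "snd (\<psi> (\<one>\<^bsub>G\<^esub>, a)) = a"
      using \<psi>_hom \<psi>_proj by (auto simp: hom_def pb_proj_def pt_proj_def)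
  qed
  show "a \<in> carrier A \<Longrightarrow> r (fst (\<psi> (\<one>\<^bsub>G\<^esub>, a))) = i a"
    using \<psi>_carrier \<psi>_snd by (force simp: carrier_pb_group)
  show "(\<lambda>a. fst (\<psi> (\<one>\<^bsub>G\<^esub>, a))) \<in> hom A F"
  proof (rule homI)
    fix a b assume a: "a \<in> carrier A" and b: "b \<in> carrier A"
    have "(\<one>\<^bsub>G\<^esub>, a \<otimes>\<^bsub>A\<^esub> b) = (\<one>\<^bsub>G\<^esub>, a) \<otimes>\<^bsub>pt_group G A\<^esub> (\<one>\<^bsub>G\<^esub>, b)"
      using \<open>monoid G\<close> by (simp add: mult_pt_group monoid.l_one monoid.one_closed)
    then show "fst (\<psi> (\<one>\<^bsub>G\<^esub>, a \<otimes>\<^bsub>A\<^esub> b)) = fst (\<psi> (\<one>\<^bsub>G\<^esub>, a)) \<otimes>\<^bsub>F\<^esub> fst (\<psi> (\<one>\<^bsub>G\<^esub>, b))"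
      using \<psi>_hom a b \<open>monoid G\<close>
      by (simp add: hom_mult carrier_pt_group mult_pb_group monoid.one_closed)
  qed (use \<psi>_carrier in \<open>force simp: carrier_pb_group case_prod_beta\<close>)
qed

locale ses_lift =
  A: group A + E: group E + B: group B + F: group F
  for A E B F +
  fixes i p r s
  assumes ses: "ses A E B i p"
    and r_hom: "r \<in> hom F E"
    and s_hom: "s \<in> hom A F"
    and r_s: "a \<in> carrier A \<Longrightarrow> r (s a) = i a"
    and normal_image: "s ` carrier A \<lhd> F"
begin

sublocale i: group_hom A E i
  using ses by (intro group_homI) (simp_all add: ses_def A.is_group E.is_group)

sublocale p: group_hom E B p
  using ses by (intro group_homI) (simp_all add: ses_def E.is_group B.is_group)

sublocale r: group_hom F E r
  using r_hom by (intro group_homI) (simp_all add: F.is_group E.is_group)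

sublocale s: group_hom A F s
  using s_hom by (intro group_homI) (simp_all add: F.is_group A.is_group)

sublocale S: normal "s ` carrier A" F
  by (fact normal_image)

lemma p_i: "a \<in> carrier A \<Longrightarrow> p (i a) = \<one>\<^bsub>B\<^esub>"
  using ses by (simp add: ses_def)

lemma elem_rcos_imageE:
  assumes "x \<in> s ` carrier A #>\<^bsub>F\<^esub> f"
  obtains a where "a \<in> carrier A" "x = s a \<otimes>\<^bsub>F\<^esub> f"
  using assms by (auto simp: r_coset_def)

lemma quot_proj_rcos:
  assumes f: "f \<in> carrier F"
  shows "quot_proj p r (s ` carrier A #>\<^bsub>F\<^esub> f) = p (r f)"
proof -
  \<comment> \<open>quot_proj evaluates p \<circ> r at an arbitrary representative; p \<circ> r kills s(A).\<close>
  let ?x = "SOME x. x \<in> s ` carrier A #>\<^bsub>F\<^esub> f"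
  have "?x \<in> s ` carrier A #>\<^bsub>F\<^esub> f"
    using f S.subgroup_axioms by (intro someI) (rule F.rcos_self)
  then obtain a where a: "a \<in> carrier A" and x: "?x = s a \<otimes>\<^bsub>F\<^esub> f"
    by (rule elem_rcos_imageE)
  have "p (r ?x) = p (i a) \<otimes>\<^bsub>B\<^esub> p (r f)"
    using a f by (simp add: x r_s)
  also have "\<dots> = p (r f)"
    using a f by (simp add: p_i)
  finally show ?thesis
    by (simp add: quot_proj_def)
qed

definition to_pullback :: "_ \<Rightarrow> _ set \<times> _" where
  "to_pullback f = (s ` carrier A #>\<^bsub>F\<^esub> f, r f)"

abbreviation pullback where
  "pullback \<equiv> pb_group (F Mod s ` carrier A) E (quot_proj p r) p"

lemma carrier_pullback:
  "carrier pullback = {(C, e). C \<in> rcosets\<^bsub>F\<^esub> (s ` carrier A) \<and> e \<in> carrier E \<and> quot_proj p r C = p e}"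
  by (simp add: carrier_pb_group FactGroup_def)

lemma to_pullback_hom: "to_pullback \<in> hom F pullback"
proof (rule homI)
  fix f assume "f \<in> carrier F"
  then show "to_pullback f \<in> carrier pullback"
    by (simp add: carrier_pullback to_pullback_def quot_proj_rcos F.rcosetsI S.subset)
next
  fix f g assume "f \<in> carrier F" "g \<in> carrier F"
  then show "to_pullback (f \<otimes>\<^bsub>F\<^esub> g) = to_pullback f \<otimes>\<^bsub>pullback\<^esub> to_pullback g"
    by (simp add: to_pullback_def mult_pb_group FactGroup_def S.rcos_sum)
qed

lemma inj_on_to_pullback: "inj_on to_pullback (carrier F)"
proof (rule inj_onI)
  fix f g assume f: "f \<in> carrier F" and g: "g \<in> carrier F" and eq: "to_pullback f = to_pullback g"
  then have "f \<in> s ` carrier A #>\<^bsub>F\<^esub> g"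
    using S.subgroup_axioms by (metis F.rcos_self prod.inject to_pullback_def)
  then obtain a where a: "a \<in> carrier A" and fa: "f = s a \<otimes>\<^bsub>F\<^esub> g"
    by (rule elem_rcos_imageE)
  have "i a \<otimes>\<^bsub>E\<^esub> r g = \<one>\<^bsub>E\<^esub> \<otimes>\<^bsub>E\<^esub> r g"
    using eq a g by (simp add: to_pullback_def fa r_s)
  then have "i a = \<one>\<^bsub>E\<^esub>"
    using a g by (simp add: E.r_cancel)
  then have "a = \<one>\<^bsub>A\<^esub>"
    using ses a by (metis A.one_closed i.hom_one inj_on_def ses_def)
  then show "f = g"
    using fa g by simp
qed

lemma to_pullback_onto: "to_pullback ` carrier F = carrier pullback"
proof
  show "to_pullback ` carrier F \<subseteq> carrier pullback"
    using to_pullback_hom by (auto simp: hom_def)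
next
  show "carrier pullback \<subseteq> to_pullback ` carrier F"
  proof
    fix x assume "x \<in> carrier pullback"
    then obtain f e where f: "f \<in> carrier F" and e: "e \<in> carrier E"
      and x: "x = (s ` carrier A #>\<^bsub>F\<^esub> f, e)" and pe: "p (r f) = p e"
      by (auto simp: carrier_pullback RCOSETS_def quot_proj_rcos)
    have "e \<otimes>\<^bsub>E\<^esub> inv\<^bsub>E\<^esub> r f \<in> kernel E B p"
      using f e pe by (simp add: kernel_def)
    then obtain a where a: "a \<in> carrier A" and ia: "i a = e \<otimes>\<^bsub>E\<^esub> inv\<^bsub>E\<^esub> r f"
      using ses by (auto simp: ses_def)
    have "r (s a \<otimes>\<^bsub>F\<^esub> f) = e"
      using a f e by (simp add: r_s ia E.m_assoc)
    moreover have "s ` carrier A #>\<^bsub>F\<^esub> (s a \<otimes>\<^bsub>F\<^esub> f) = s ` carrier A #>\<^bsub>F\<^esub> f"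
      using a f S.subgroup_axioms
      by (metis F.rcosI F.repr_independence S.subset image_eqI)
    ultimately have "x = to_pullback (s a \<otimes>\<^bsub>F\<^esub> f)"
      by (simp add: to_pullback_def x)
    then show "x \<in> to_pullback ` carrier F"
      using a f by simp
  qed
qed

lemma to_pullback_iso: "to_pullback \<in> iso F pullback"
  using to_pullback_hom inj_on_to_pullback to_pullback_onto by (simp add: iso_iff)

definition from_pullback where
  "from_pullback = inv_into (carrier F) to_pullback"

lemma from_pullback_iso: "from_pullback \<in> iso pullback F"
  unfolding from_pullback_def by (rule F.iso_set_sym[OF to_pullback_iso])

lemma from_pullback_to_pullback: "f \<in> carrier F \<Longrightarrow> from_pullback (to_pullback f) = f"
  by (simp add: from_pullback_def inj_on_to_pullback)

lemma r_from_pullback: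
  assumes "x \<in> carrier pullback"
  shows "r (from_pullback x) = snd x"
proof -
  have "to_pullback (from_pullback x) = x"
    using assms by (simp add: from_pullback_def f_inv_into_f to_pullback_onto)
  then show ?thesis
    by (metis snd_conv to_pullback_def)
qed

end

lemma ses_lift_of_trivialisation:
  assumes "group A" "group E" "group B" "monoid G" "comm_group F"
    and "ses A E B i p" "r \<in> hom F E"
    and \<psi>_hom: "\<psi> \<in> hom (pt_group G A) (pb_group F A r i)"
    and \<psi>_proj: "\<forall>x\<in>carrier (pt_group G A). pb_proj (\<psi> x) = pt_proj x"
  shows "ses_lift A E B F i p r (\<lambda>a. fst (\<psi> (\<one>\<^bsub>G\<^esub>, a)))"
proof -
  interpret F: comm_group F by fact
  note lift = pb_trivialisation_lift[OF \<open>monoid G\<close> \<psi>_hom \<psi>_proj]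
  have "(\<lambda>a. fst (\<psi> (\<one>\<^bsub>G\<^esub>, a))) ` carrier A \<lhd> F"
    using lift(1) \<open>group A\<close>
    by (intro F.subgroup_imp_normal group_hom.img_is_subgroup group_homI F.is_group)
  with assms lift show ?thesis
    by (intro ses_lift.intro ses_lift_axioms.intro F.is_group)
qed

theorem lemma15:
  assumes "comm_group A" and "comm_group E" and "comm_group B"
    and "comm_group G" and "comm_group F"
    and ses_AEB: "ses A E B i p"
    and ses_GFE: "ses G F E k r"
    and psi_iso: "\<psi> \<in> iso (pt_group G A) (pb_group F A r i)"
    and psi_incl: "\<forall>g\<in>carrier G. \<psi> (pt_incl A g) = pb_incl A k g"
    and psi_proj: "\<forall>x\<in>carrier (pt_group G A). pb_proj (\<psi> x) = pt_proj x"
  shows "\<exists>\<phi>. \<phi> \<in> iso (pb_group (quot_group F G A \<psi>) E (quot_proj p r) p) F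
           \<and> (\<forall>g\<in>carrier G. \<phi> (pb_incl E (quot_incl F G A \<psi> k) g) = k g)
           \<and> (\<forall>x\<in>carrier (pb_group (quot_group F G A \<psi>) E (quot_proj p r) p).
                 r (\<phi> x) = pb_proj x)"
proof -
  define s where "s = (\<lambda>a. fst (\<psi> (\<one>\<^bsub>G\<^esub>, a)))"
  interpret ses_lift A E B F i p r s
    unfolding s_def using assms
    by (intro ses_lift_of_trivialisation) (auto simp: comm_group_def group.is_monoid ses_def iso_def)
  have image: "A_image G A \<psi> = s ` carrier A"
    by (simp add: A_image_def s_def)
  show ?thesis
  proof (intro exI conjI ballI)
    show "from_pullback \<in> iso (pb_group (quot_group F G A \<psi>) E (quot_proj p r) p) F"
      using from_pullback_iso by (simp add: quot_group_def image)
  next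
    fix g assume "g \<in> carrier G"
    with ses_GFE have "pb_incl E (quot_incl F G A \<psi> k) g = to_pullback (k g)" "k g \<in> carrier F"
      by (auto simp: ses_def pb_incl_def quot_incl_def to_pullback_def image hom_def)
    then show "from_pullback (pb_incl E (quot_incl F G A \<psi> k) g) = k g"
      by (simp add: from_pullback_to_pullback)
  next
    fix x assume "x \<in> carrier (pb_group (quot_group F G A \<psi>) E (quot_proj p r) p)"
    then show "r (from_pullback x) = pb_proj x"
      by (simp add: r_from_pullback quot_group_def image pb_proj_def)
  qed
qed

end
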